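(* Let $X$ be a compact metric space with metric $d$, let $0<L<1$, and let $f\colon X\to X$ be a continuous map with the $L$-Lipschitz shadowing property. Then the set $\mathcal{C}(f)$ of chain components of $f$ is finite, and for every $C\in\mathcal{C}(f)$, the restriction $f|_C\colon C\to C$ (with the restricted metric) has the $L$-Lipschitz shadowing property.
   Context: For a continuous map $g\colon Y\to Y$ on a metric space $(Y,d)$ and $\delta>0$, a sequence $(x_i)_{i\ge0}$ in $Y$ is a $\delta$-pseudo orbit of $g$ if $d(g(x_i),x_{i+1})\le\delta$ for all $i\ge0$; it is $\epsilon$-shadowed by $y$ if $d(g^i(y),x_i)\le\epsilon$ for all $i\ge0$. $g$ has the $L$-Lipschitz shadowing property if there is $\delta_0>0$ such that for every $0<\delta\le\delta_0$, every $\delta$-pseudo orbit of $g$ is $L\delta$-shadowed by some point of $Y$. A $\delta$-chain of $f$ is a finite sequence $(x_i)_{i=0}^k$, $k\ge1$, with $d(f(x_i),x_{i+1})\le\delta$ for $0\le i\le k-1$. Write $x\to y$ if for every $\delta>0$ there is a $\delta$-chain from $x$ to $y$ (i.e. $x_0=x$, $x_k=y$). $CR(f)=\{x\in X: x\to x\}$. On $CR(f)$ define $x\leftrightarrow y$ iff $x\to y$ and $y\to x$; this is an equivalence relation, and its equivalence classes are the chain components of $f$; $\mathcal{C}(f)$ denotes the set of chain components. Each chain component is a closed $f$-invariant subset. *)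

theory Defs
  imports "HOL-Analysis.Analysis"
begin

text \<open>The ambient compact metric space is a set X in a metric_space type, with the
restricted metric dist. All notions are relativised to a carrier set Y.\<close>

definition pseudo_orbit :: "'a::metric_space set \<Rightarrow> ('a \<Rightarrow> 'a) \<Rightarrow> real \<Rightarrow> (nat \<Rightarrow> 'a) \<Rightarrow> bool" where
  "pseudo_orbit Y g \<delta> xs \<longleftrightarrow> (\<forall>i. xs i \<in> Y) \<and> (\<forall>i. dist (g (xs i)) (xs (Suc i)) \<le> \<delta>)"

definition shadows :: "('a::metric_space \<Rightarrow> 'a) \<Rightarrow> real \<Rightarrow> 'a \<Rightarrow> (nat \<Rightarrow> 'a) \<Rightarrow> bool" where
  "shadows g \<epsilon> y xs \<longleftrightarrow> (\<forall>i. dist ((g ^^ i) y) (xs i) \<le> \<epsilon>)"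

definition lipschitz_shadowing :: "'a::metric_space set \<Rightarrow> ('a \<Rightarrow> 'a) \<Rightarrow> real \<Rightarrow> bool" where
  "lipschitz_shadowing Y g L \<longleftrightarrow>
     (\<exists>\<delta>0>0. \<forall>\<delta>. 0 < \<delta> \<and> \<delta> \<le> \<delta>0 \<longrightarrow>
        (\<forall>xs. pseudo_orbit Y g \<delta> xs \<longrightarrow> (\<exists>y\<in>Y. shadows g (L * \<delta>) y xs)))"

definition delta_chain :: "'a::metric_space set \<Rightarrow> ('a \<Rightarrow> 'a) \<Rightarrow> real \<Rightarrow> 'a \<Rightarrow> 'a \<Rightarrow> bool" where
  "delta_chain X f \<delta> x y \<longleftrightarrow>
     (\<exists>k::nat. \<exists>xs. k \<ge> 1 \<and> xs 0 = x \<and> xs k = y \<and> (\<forall>i\<le>k. xs i \<in> X) \<and>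
        (\<forall>i<k. dist (f (xs i)) (xs (Suc i)) \<le> \<delta>))"

definition chain_rel :: "'a::metric_space set \<Rightarrow> ('a \<Rightarrow> 'a) \<Rightarrow> 'a \<Rightarrow> 'a \<Rightarrow> bool" where
  "chain_rel X f x y \<longleftrightarrow> (\<forall>\<delta>>0. delta_chain X f \<delta> x y)"

definition chain_recurrent :: "'a::metric_space set \<Rightarrow> ('a \<Rightarrow> 'a) \<Rightarrow> 'a set" where
  "chain_recurrent X f = {x \<in> X. chain_rel X f x x}"

definition chain_components :: "'a::metric_space set \<Rightarrow> ('a \<Rightarrow> 'a) \<Rightarrow> 'a set set" where
  "chain_components X f =
     {C. \<exists>x\<in>chain_recurrent X f.
           C = {y \<in> chain_recurrent X f. chain_rel X f x y \<and> chain_rel X f y x}}"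

end

theory Submission
  imports Defs
begin

text \<open>
  Let \<open>\<delta>\<^sub>0\<close> be the scale of the Lipschitz shadowing.  Shadowing a chain whose beginning is a
  genuine orbit segment, or a short loop at a chain recurrent point, and replacing the rest of the
  chain by the orbit of the shadowing point keeps both end points and multiplies the errors of the
  tail by L.  As L < 1, iterating this refines every \<open>\<delta>\<^sub>0\<close>-chain starting at a chain recurrent
  point x into arbitrarily fine chains, so x \<rightarrow> y whenever \<open>dist x y < \<delta>\<^sub>0\<close>.  Hence distinct chain
  components are \<open>\<delta>\<^sub>0\<close>-apart, and compactness leaves only finitely many.  If z shadows a
  pseudo orbit \<open>x\<^sub>i\<close> inside a component C, refining the chains \<open>z, f z, \<dots>, f\<^sup>J z, x\<^sub>J\<^sub>+\<^sub>1\<close> gives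
  z \<rightarrow> C, while \<open>dist x\<^sub>0 z \<le> L \<delta> < \<delta>\<^sub>0\<close> gives \<open>x\<^sub>0\<close> \<rightarrow> z; so z lies in C.
\<close>

abbreviation jump :: "('a::metric_space \<Rightarrow> 'a) \<Rightarrow> (nat \<Rightarrow> 'a) \<Rightarrow> nat \<Rightarrow> real" where
  "jump f r i \<equiv> dist (f (r i)) (r (Suc i))"

lemma funpow_mem_invariant:
  assumes "f ` X \<subseteq> X" "x \<in> X"
  shows "(f ^^ n) x \<in> X"
  using assms by (induction n) auto

lemma exists_pow_mult_le:
  fixes c a \<eta> :: real
  assumes "c < 1" "0 < a" "0 < \<eta>"
  shows "\<exists>n. c ^ n * a \<le> \<eta>"
proof -
  obtain n where "c ^ n < \<eta> / a"
    using real_arch_pow_inv assms by (meson divide_pos_pos)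
  then show ?thesis
    using assms(2) by (auto simp: pos_less_divide_eq intro: less_imp_le)
qed

lemma finite_separated_family:
  fixes S :: "'a::metric_space set"
  assumes "compact S" "0 < e"
    and "\<And>C. C \<in> \<C> \<Longrightarrow> C \<noteq> {} \<and> C \<subseteq> S"
    and "\<And>C D x y. C \<in> \<C> \<Longrightarrow> D \<in> \<C> \<Longrightarrow> x \<in> C \<Longrightarrow> y \<in> D \<Longrightarrow> dist x y < e \<Longrightarrow> C = D"
  shows "finite \<C>"
proof -
  obtain K where "finite K" and K: "S \<subseteq> (\<Union>k\<in>K. ball k (e / 2))"
    using seq_compact_imp_totally_bounded[OF compact_imp_seq_compact[OF assms(1)]] assms(2)
    by (meson half_gt_zero)
  define pick where "pick k = (SOME C. C \<in> \<C> \<and> C \<inter> ball k (e / 2) \<noteq> {})" for k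
  have "\<C> \<subseteq> pick ` K"
  proof
    fix C assume "C \<in> \<C>"
    then obtain x where "x \<in> C" "x \<in> S" using assms(3) by blast
    then obtain k where "k \<in> K" and xk: "x \<in> C \<inter> ball k (e / 2)" using K by blast
    then have "\<exists>D. D \<in> \<C> \<and> D \<inter> ball k (e / 2) \<noteq> {}" using \<open>C \<in> \<C>\<close> by blast
    then have "pick k \<in> \<C> \<and> pick k \<inter> ball k (e / 2) \<noteq> {}"
      unfolding pick_def by (rule someI_ex)
    then obtain y where "pick k \<in> \<C>" "y \<in> pick k" "dist k y < e / 2" by auto
    moreover have "dist x y < e"
      using xk \<open>dist k y < e / 2\<close> dist_triangle[of x y k] by (simp add: dist_commute)
    ultimately have "C = pick k" using assms(4)[of C "pick k" x y] \<open>C \<in> \<C>\<close> xk by blast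
    then show "C \<in> pick ` K" using \<open>k \<in> K\<close> by blast
  qed
  then show ?thesis using \<open>finite K\<close> finite_surj by blast
qed

lemma delta_chainI:
  assumes "1 \<le> k" "r 0 = x" "r k = y" "\<forall>i\<le>k. r i \<in> X" "\<forall>i<k. jump f r i \<le> \<delta>"
  shows "delta_chain X f \<delta> x y"
  using assms unfolding delta_chain_def by blast

lemma delta_chainE:
  assumes "delta_chain X f \<delta> x y"
  obtains k r where "1 \<le> k" "r 0 = x" "r k = y" "\<forall>i\<le>k. r i \<in> X" "\<forall>i<k. jump f r i \<le> \<delta>"
  using assms unfolding delta_chain_def by blast

lemma delta_chain_mono:
  assumes "delta_chain X f \<delta> x y" "\<delta> \<le> \<epsilon>"
  shows "delta_chain X f \<epsilon> x y"
  using assms(1)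
proof (rule delta_chainE)
  fix k r assume r: "1 \<le> k" "r 0 = x" "r k = y" "\<forall>i\<le>k. r i \<in> X" "\<forall>i<k. jump f r i \<le> \<delta>"
  then have "\<forall>i<k. jump f r i \<le> \<epsilon>" using assms(2) by fastforce
  with r show ?thesis by (intro delta_chainI[of k r]) auto
qed

lemma delta_chain_append:
  assumes "delta_chain X f \<delta> x y" "delta_chain X f \<epsilon> y z"
  obtains m n r where "0 < m" "m < n" "r 0 = x" "r n = z" "\<forall>i\<le>n. r i \<in> X"
    "\<forall>i<n. jump f r i \<le> (if i < m then \<delta> else \<epsilon>)"
proof -
  obtain m p where p: "1 \<le> m" "p 0 = x" "p m = y" "\<forall>i\<le>m. p i \<in> X" "\<forall>i<m. jump f p i \<le> \<delta>"
    using assms(1) by (rule delta_chainE)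
  obtain k q where q: "1 \<le> k" "q 0 = y" "q k = z" "\<forall>i\<le>k. q i \<in> X" "\<forall>i<k. jump f q i \<le> \<epsilon>"
    using assms(2) by (rule delta_chainE)
  define r where "r i = (if i \<le> m then p i else q (i - m))" for i
  have "jump f r i \<le> (if i < m then \<delta> else \<epsilon>)" if "i < m + k" for i
  proof (cases "i < m")
    case True
    then show ?thesis using p by (simp add: r_def)
  next
    case False
    then have "Suc i - m = Suc (i - m)" "i - m < k" using that by auto
    then show ?thesis using p q False by (cases "i = m") (auto simp: r_def)
  qed
  moreover have "r 0 = x" "r (m + k) = z" "\<forall>i\<le>m + k. r i \<in> X"
    using p q by (auto simp: r_def)
  ultimately show ?thesis using p(1) q(1) by (intro that[of m "m + k" r]) auto
qed

lemma delta_chain_trans: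
  assumes "delta_chain X f \<delta> x y" "delta_chain X f \<delta> y z"
  shows "delta_chain X f \<delta> x z"
  using assms
proof (rule delta_chain_append)
  fix m n r assume "0 < m" "m < n" "r 0 = x" "r n = z" "\<forall>i\<le>n. r i \<in> X"
    "\<forall>i<n. jump f r i \<le> (if i < m then \<delta> else \<delta>)"
  then show ?thesis by (intro delta_chainI[of n r]) auto
qed

lemma delta_chain_move_target:
  assumes "delta_chain X f \<delta> x y" "z \<in> X"
  shows "delta_chain X f (\<delta> + dist y z) x z"
  using assms(1)
proof (rule delta_chainE)
  fix k r assume r: "1 \<le> k" "r 0 = x" "r k = y" "\<forall>i\<le>k. r i \<in> X" "\<forall>i<k. jump f r i \<le> \<delta>"
  have "jump f (r(k := z)) i \<le> \<delta> + dist y z" if "i < k" for i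
  proof (cases "Suc i = k")
    case True
    then show ?thesis
      using r(3,5) that dist_triangle[of "f (r i)" z y] by (auto simp: dist_commute)
  next
    case False
    then show ?thesis using r(5) that by (simp add: add_increasing2)
  qed
  then show ?thesis using r assms(2) by (intro delta_chainI[of k "r(k := z)"]) auto
qed

lemma chain_rel_trans:
  "chain_rel X f x y \<Longrightarrow> chain_rel X f y z \<Longrightarrow> chain_rel X f x z"
  unfolding chain_rel_def using delta_chain_trans by blast

lemma chain_component_eq:
  assumes "C \<in> chain_components X f" "x \<in> C"
  shows "C = {y \<in> chain_recurrent X f. chain_rel X f x y \<and> chain_rel X f y x}"
proof -
  obtain a where C: "C = {y \<in> chain_recurrent X f. chain_rel X f a y \<and> chain_rel X f y a}"
    using assms(1) unfolding chain_components_def by blast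
  with assms(2) have "chain_rel X f a x" "chain_rel X f x a" by auto
  then show ?thesis unfolding C by (blast intro: chain_rel_trans)
qed

lemma chain_component_subset:
  "C \<in> chain_components X f \<Longrightarrow> C \<subseteq> X"
  unfolding chain_components_def chain_recurrent_def by blast

lemma chain_component_nonempty:
  "C \<in> chain_components X f \<Longrightarrow> C \<noteq> {}"
  unfolding chain_components_def chain_recurrent_def by blast

lemma chain_component_chain_rel:
  "C \<in> chain_components X f \<Longrightarrow> x \<in> C \<Longrightarrow> y \<in> C \<Longrightarrow> chain_rel X f x y"
  using chain_component_eq by blast

lemma chain_component_memI:
  assumes "C \<in> chain_components X f" "x \<in> C" "y \<in> X" "chain_rel X f x y" "chain_rel X f y x"
  shows "y \<in> C"
proof -
  have "chain_rel X f y y" using assms(5,4) by (rule chain_rel_trans)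
  then show ?thesis
    using assms chain_component_eq[OF assms(1,2)] unfolding chain_recurrent_def by blast
qed

locale lipschitz_shadowing_system =
  fixes X :: "'a::metric_space set" and f :: "'a \<Rightarrow> 'a" and L \<delta>0 :: real
  assumes maps_into: "f ` X \<subseteq> X"
    and L_pos: "0 < L" and L_less_1: "L < 1" and \<delta>0_pos: "0 < \<delta>0"
    and shadowing: "\<And>\<delta> xs. 0 < \<delta> \<Longrightarrow> \<delta> \<le> \<delta>0 \<Longrightarrow> pseudo_orbit X f \<delta> xs \<Longrightarrow>
      \<exists>y\<in>X. shadows f (L * \<delta>) y xs"
begin

lemma reshadow_tail:
  assumes "0 < \<delta>" "\<delta> \<le> \<delta>0" "\<forall>i\<le>k. r i \<in> X" "\<forall>i<k. jump f r i \<le> \<delta>" "j < k"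
  obtains r' where "\<forall>i\<le>j. r' i = r i" "r' k = r k" "\<forall>i\<le>k. r' i \<in> X"
    "jump f r' j \<le> jump f r j + L * \<delta>" "\<forall>i. j < i \<and> i < k \<longrightarrow> jump f r' i \<le> L * \<delta>"
proof -
  define xs where "xs i = (if i \<le> k then r i else (f ^^ (i - k)) (r k))" for i
  have "pseudo_orbit X f \<delta> xs"
    unfolding pseudo_orbit_def
  proof (intro conjI allI)
    fix i
    show "xs i \<in> X"
      using assms(3) funpow_mem_invariant[OF maps_into, of "r k"] by (simp add: xs_def)
    show "jump f xs i \<le> \<delta>"
    proof (cases "i < k")
      case True
      then show ?thesis using assms(4) by (simp add: xs_def)
    next
      case False
      then have "Suc i - k = Suc (i - k)" by auto
      then show ?thesis using False assms(1) by (cases "i = k") (auto simp: xs_def)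
    qed
  qed
  then obtain w where "w \<in> X" and w: "\<And>i. dist ((f ^^ i) w) (xs i) \<le> L * \<delta>"
    using shadowing assms(1,2) unfolding shadows_def by blast
  define r' where "r' i = (if i \<le> j then r i else if i < k then (f ^^ i) w else r k)" for i
  have "jump f r' j \<le> jump f r j + L * \<delta>"
  proof (cases "Suc j < k")
    case True
    have "dist (r (Suc j)) ((f ^^ Suc j) w) \<le> L * \<delta>"
      using w[of "Suc j"] True by (simp add: xs_def dist_commute)
    then show ?thesis
      using True dist_triangle[of "f (r j)" "(f ^^ Suc j) w" "r (Suc j)"] by (simp add: r'_def)
  next
    case False
    then have "Suc j = k" using assms(5) by simp
    then show ?thesis using assms(1) L_pos by (simp add: r'_def)
  qed
  moreover have "jump f r' i \<le> L * \<delta>" if "j < i" "i < k" for i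
  proof (cases "Suc i < k")
    case True
    then show ?thesis using that assms(1) L_pos by (simp add: r'_def)
  next
    case False
    then have "Suc i = k" using that by simp
    then show ?thesis using that w[of k] by (auto simp: r'_def xs_def)
  qed
  moreover have "\<forall>i\<le>k. r' i \<in> X"
    using assms(3) funpow_mem_invariant[OF maps_into \<open>w \<in> X\<close>] by (simp add: r'_def)
  ultimately show ?thesis using assms(5) by (intro that[of r']) (auto simp: r'_def)
qed

lemma recurrent_chain_shrink:
  assumes "chain_rel X f x x" "delta_chain X f \<delta> x y" "0 < \<delta>" "\<delta> \<le> \<delta>0" "0 < \<epsilon>" "\<epsilon> \<le> \<delta>"
  shows "delta_chain X f (\<epsilon> + L * \<delta>) x y"
proof -
  have "delta_chain X f \<epsilon> x x" using assms(1,5) unfolding chain_rel_def by blast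
  then obtain m n r where mn: "0 < m" "m < n" and r: "r 0 = x" "r n = y" "\<forall>i\<le>n. r i \<in> X"
    and jumps: "\<forall>i<n. jump f r i \<le> (if i < m then \<epsilon> else \<delta>)"
    using assms(2) by (rule delta_chain_append)
  have "\<forall>i<n. jump f r i \<le> \<delta>" using jumps assms(6) by (auto split: if_splits)
  moreover have "m - 1 < n" using mn by simp
  ultimately obtain r' where r': "\<forall>i\<le>m - 1. r' i = r i" "r' n = r n" "\<forall>i\<le>n. r' i \<in> X"
    "jump f r' (m - 1) \<le> jump f r (m - 1) + L * \<delta>"
    "\<forall>i. m - 1 < i \<and> i < n \<longrightarrow> jump f r' i \<le> L * \<delta>"
    by (rule reshadow_tail[OF assms(3,4) r(3)])
  have L\<delta>: "0 \<le> L * \<delta>" using L_pos assms(3) by simp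
  have loop_jumps: "jump f r i \<le> \<epsilon>" if "i < m" for i
    using jumps[rule_format, of i] that mn by simp
  have "jump f r' i \<le> \<epsilon> + L * \<delta>" if "i < n" for i
  proof (cases i "m - 1" rule: linorder_cases)
    case less
    then have "jump f r' i = jump f r i" using r'(1) by simp
    moreover have "jump f r i \<le> \<epsilon>" using less by (intro loop_jumps) simp
    ultimately show ?thesis using L\<delta> by simp
  next
    case equal
    moreover have "jump f r (m - 1) \<le> \<epsilon>" using mn by (intro loop_jumps) simp
    ultimately show ?thesis using r'(4) by simp
  next
    case greater
    then show ?thesis using r'(5) that assms(5) by fastforce
  qed
  then show ?thesis using r r' mn by (intro delta_chainI[of n r']) auto
qed

lemma chain_rel_if_recurrent_chain:
  assumes "chain_rel X f x x" "delta_chain X f \<delta> x y" "0 < \<delta>" "\<delta> \<le> \<delta>0"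
  shows "chain_rel X f x y"
proof -
  \<comment> \<open>Each round trades the error \<open>\<epsilon>\<close> of a short loop at x for a contraction by L of
    the chain's error; with \<open>\<epsilon> = (1 - L) e / 2\<close> the error e shrinks by the factor c.\<close>
  define c where "c = (1 + L) / 2"
  have c: "0 < c" "c < 1" using L_pos L_less_1 by (auto simp: c_def)
  have chain: "delta_chain X f (c ^ n * \<delta>) x y" for n
  proof (induction n)
    case 0
    then show ?case using assms(2) by simp
  next
    case (Suc n)
    define e where "e = c ^ n * \<delta>"
    have "c ^ n \<le> 1" using c by (simp add: power_le_one)
    then have "e \<le> \<delta>" using assms(3) by (simp add: e_def mult_left_le_one_le)
    moreover have "0 < e" using c assms(3) by (simp add: e_def)
    moreover have "0 < (1 - L) / 2 * e" "(1 - L) / 2 * e \<le> e"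
      using \<open>0 < e\<close> L_pos L_less_1 by auto
    ultimately have "delta_chain X f ((1 - L) / 2 * e + L * e) x y"
      using recurrent_chain_shrink[OF assms(1) Suc.IH[folded e_def]] assms(4) by simp
    moreover have "(1 - L) / 2 * e + L * e = c * e" by (simp add: c_def field_simps)
    moreover have "c * e = c ^ Suc n * \<delta>" by (simp add: e_def)
    ultimately show ?case by simp
  qed
  show ?thesis unfolding chain_rel_def
  proof (intro allI impI)
    fix \<eta> :: real assume "0 < \<eta>"
    then obtain n where "c ^ n * \<delta> \<le> \<eta>" using exists_pow_mult_le c(2) assms(3) by blast
    then show "delta_chain X f \<eta> x y" by (rule delta_chain_mono[OF chain])
  qed
qed

lemma chain_rel_if_dist_less:
  assumes "chain_rel X f x x" "y \<in> X" "dist x y < \<delta>0"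
  shows "chain_rel X f x y"
proof -
  have "delta_chain X f (\<delta>0 - dist x y) x x" using assms(1,3) unfolding chain_rel_def by simp
  then have "delta_chain X f \<delta>0 x y" using delta_chain_move_target[OF _ assms(2)] by force
  then show ?thesis by (rule chain_rel_if_recurrent_chain[OF assms(1) _ \<delta>0_pos order_refl])
qed

lemma contract_chain_with_orbit_prefix:
  assumes "\<forall>i\<le>k. r i \<in> X" "\<forall>i<j. f (r i) = r (Suc i)" "\<forall>i<k. jump f r i \<le> e"
    "j \<le> k" "0 < e" "e \<le> \<delta>0"
  shows "\<exists>r'. r' 0 = r 0 \<and> r' k = r k \<and> (\<forall>i\<le>k. r' i \<in> X) \<and> (\<forall>i<k. jump f r' i \<le> L ^ j * e)"
  using assms
proof (induction j arbitrary: r e)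
  case 0
  then show ?case by auto
next
  case (Suc j)
  have "j < k" using Suc.prems(4) by simp
  \<comment> \<open>Reshadow from the end of the orbit prefix: the jump at j was zero, so all jumps drop to L e.\<close>
  with Suc.prems(5,6,1,3) obtain r' where r': "\<forall>i\<le>j. r' i = r i" "r' k = r k" "\<forall>i\<le>k. r' i \<in> X"
    "jump f r' j \<le> jump f r j + L * e" "\<forall>i. j < i \<and> i < k \<longrightarrow> jump f r' i \<le> L * e"
    by (rule reshadow_tail)
  have orbit: "f (r i) = r (Suc i)" if "i \<le> j" for i
    using Suc.prems(2) that by simp
  have "\<forall>i<j. f (r' i) = r' (Suc i)" using r'(1) orbit by simp
  moreover have "\<forall>i<k. jump f r' i \<le> L * e"
  proof (intro allI impI)
    fix i assume "i < k"
    consider "i < j" | "i = j" | "j < i" by linarith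
    then show "jump f r' i \<le> L * e"
    proof cases
      case 1
      then show ?thesis using r'(1) orbit L_pos Suc.prems(5) by simp
    next
      case 2
      then show ?thesis using r'(4) orbit[of j] by simp
    next
      case 3
      then show ?thesis using r'(5) \<open>i < k\<close> by blast
    qed
  qed
  moreover have "0 < L * e" "L * e \<le> \<delta>0"
    using L_pos L_less_1 Suc.prems(5,6) by (auto intro: order_trans[OF mult_left_le_one_le])
  ultimately obtain r'' where "r'' 0 = r' 0" "r'' k = r' k" "\<forall>i\<le>k. r'' i \<in> X"
      "\<forall>i<k. jump f r'' i \<le> L ^ j * (L * e)"
    using Suc.IH[of r' "L * e"] r'(3) \<open>j < k\<close> by auto
  then show ?case using r'(1,2) by (intro exI[of _ r'']) (auto simp: mult_ac)
qed

lemma delta_chain_from_orbit: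
  assumes "z \<in> X" "b \<in> X" "dist ((f ^^ Suc J) z) b \<le> e" "0 < e" "e \<le> \<delta>0"
  shows "delta_chain X f (L ^ J * e) z b"
proof -
  define r where "r i = (if i \<le> J then (f ^^ i) z else b)" for i
  have "\<forall>i\<le>Suc J. r i \<in> X"
    using funpow_mem_invariant[OF maps_into assms(1)] assms(2) by (simp add: r_def)
  moreover have "\<forall>i<J. f (r i) = r (Suc i)" by (simp add: r_def)
  moreover have "\<forall>i<Suc J. jump f r i \<le> e"
    using assms(3,4) by (auto simp: r_def less_Suc_eq)
  ultimately obtain r' where "r' 0 = r 0" "r' (Suc J) = r (Suc J)" "\<forall>i\<le>Suc J. r' i \<in> X"
      "\<forall>i<Suc J. jump f r' i \<le> L ^ J * e"
    using contract_chain_with_orbit_prefix[of "Suc J" r J e] assms(4,5) by auto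
  then show ?thesis by (intro delta_chainI[of "Suc J" r']) (auto simp: r_def)
qed

lemma finite_chain_components:
  assumes "compact X"
  shows "finite (chain_components X f)"
proof (rule finite_separated_family[OF assms \<delta>0_pos])
  fix C assume "C \<in> chain_components X f"
  then show "C \<noteq> {} \<and> C \<subseteq> X"
    using chain_component_nonempty chain_component_subset by blast
next
  fix C D x y
  assume C: "C \<in> chain_components X f" and D: "D \<in> chain_components X f"
    and "x \<in> C" "y \<in> D" "dist x y < \<delta>0"
  have "x \<in> X" "y \<in> X" using C D \<open>x \<in> C\<close> \<open>y \<in> D\<close> chain_component_subset by blast+
  have "chain_rel X f x x" "chain_rel X f y y"
    using C D \<open>x \<in> C\<close> \<open>y \<in> D\<close> chain_component_chain_rel by blast+
  then have "chain_rel X f x y" "chain_rel X f y x"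
    using chain_rel_if_dist_less \<open>x \<in> X\<close> \<open>y \<in> X\<close> \<open>dist x y < \<delta>0\<close> by (auto simp: dist_commute)
  then have "y \<in> C" using chain_component_memI[OF C \<open>x \<in> C\<close> \<open>y \<in> X\<close>] by blast
  then show "C = D"
    using chain_component_eq[OF C] chain_component_eq[OF D] \<open>y \<in> D\<close> by blast
qed

lemma shadowing_point_mem_chain_component:
  assumes C: "C \<in> chain_components X f" and xsC: "\<And>n. xs n \<in> C"
    and "z \<in> X" and z: "shadows f e z xs" and e: "0 < e" "e < \<delta>0"
  shows "z \<in> C"
proof -
  have xsX: "\<And>n. xs n \<in> X" using xsC chain_component_subset[OF C] by blast
  have "chain_rel X f z (xs 0)"
    unfolding chain_rel_def
  proof (intro allI impI)
    fix \<eta> :: real assume "0 < \<eta>"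
    then obtain J where J: "L ^ J * e \<le> \<eta>" using exists_pow_mult_le L_less_1 e(1) by blast
    have "dist ((f ^^ Suc J) z) (xs (Suc J)) \<le> e" using z unfolding shadows_def by blast
    then have "delta_chain X f (L ^ J * e) z (xs (Suc J))"
      using delta_chain_from_orbit \<open>z \<in> X\<close> xsX e by simp
    then have "delta_chain X f \<eta> z (xs (Suc J))" using J by (rule delta_chain_mono)
    moreover have "delta_chain X f \<eta> (xs (Suc J)) (xs 0)"
      using chain_component_chain_rel[OF C xsC xsC] \<open>0 < \<eta>\<close> unfolding chain_rel_def by blast
    ultimately show "delta_chain X f \<eta> z (xs 0)" by (rule delta_chain_trans)
  qed
  moreover have "chain_rel X f (xs 0) z"
  proof (rule chain_rel_if_dist_less)
    show "chain_rel X f (xs 0) (xs 0)" using chain_component_chain_rel[OF C xsC xsC] .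
    have "dist (xs 0) z \<le> e" using z unfolding shadows_def by (metis funpow_0 dist_commute)
    then show "dist (xs 0) z < \<delta>0" using e by linarith
  qed (fact \<open>z \<in> X\<close>)
  ultimately show "z \<in> C" using chain_component_memI[OF C xsC \<open>z \<in> X\<close>] by blast
qed

lemma chain_component_lipschitz_shadowing:
  assumes C: "C \<in> chain_components X f"
  shows "lipschitz_shadowing C f L"
  unfolding lipschitz_shadowing_def
proof (intro exI[of _ \<delta>0] conjI \<delta>0_pos allI impI)
  fix \<delta> xs assume \<delta>: "0 < \<delta> \<and> \<delta> \<le> \<delta>0" and "pseudo_orbit C f \<delta> xs"
  then have xsC: "\<And>n. xs n \<in> C" unfolding pseudo_orbit_def by blast
  then have "pseudo_orbit X f \<delta> xs"
    using \<open>pseudo_orbit C f \<delta> xs\<close> chain_component_subset[OF C] unfolding pseudo_orbit_def by blast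
  then obtain z where "z \<in> X" and z: "shadows f (L * \<delta>) z xs" using shadowing \<delta> by blast
  have "L * \<delta> < 1 * \<delta>" using L_less_1 \<delta> by (intro mult_strict_right_mono) auto
  then have "0 < L * \<delta>" "L * \<delta> < \<delta>0" using L_pos \<delta> by (simp, linarith)
  then have "z \<in> C" using shadowing_point_mem_chain_component[OF C xsC \<open>z \<in> X\<close> z] by blast
  then show "\<exists>y\<in>C. shadows f (L * \<delta>) y xs" using z by blast
qed

end

theorem theorem1p8:
  fixes X :: "'a::metric_space set" and f :: "'a \<Rightarrow> 'a" and L :: real
  assumes "compact X"
    and "continuous_on X f" and "f ` X \<subseteq> X"
    and "0 < L" and "L < 1"
    and "lipschitz_shadowing X f L"
  shows "finite (chain_components X f) \<and>
         (\<forall>C\<in>chain_components X f. lipschitz_shadowing C f L)"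
proof -
  obtain \<delta>0 where "0 < \<delta>0" and "\<forall>\<delta>. 0 < \<delta> \<and> \<delta> \<le> \<delta>0 \<longrightarrow>
      (\<forall>xs. pseudo_orbit X f \<delta> xs \<longrightarrow> (\<exists>y\<in>X. shadows f (L * \<delta>) y xs))"
    using assms(6) unfolding lipschitz_shadowing_def by blast
  then interpret lipschitz_shadowing_system X f L \<delta>0
    using assms(3-5) by unfold_locales blast+
  show ?thesis
    using finite_chain_components[OF assms(1)] chain_component_lipschitz_shadowing by blast
qed

end
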